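(* Let $(A,* )$ be an involutive associative algebra, $(M,* )$ an involutive $A$-bimodule, and $T:M\to A$ a relative Rota-Baxter operator on $A$ with respect to $M$. Let $T_t=\sum_{i\ge0}t^iT_i$ (with $T_0=T$) be a formal one-parameter deformation of $T$. Then $T_1\in i\mathrm{Hom}(M,A)$ is a $1$-cocycle in the complex $(i\mathrm{Hom}(M^{\otimes\bullet},A),d_T)$, and its cohomology class in $iH^1_T(M,A)$ depends only on the equivalence class of the deformation $T_t$.
   Context: An involutive associative algebra is an associative algebra $A$ with a linear map $*:A\to A$ satisfying $a^{**}=a$ and $(ab)^*=b^*a^*$; an involutive $A$-bimodule is an $A$-bimodule $M$ with $*:M\to M$, $u^{**}=u$, $(au)^*=u^*a^*$, $(ua)^*=a^*u^*$. A relative Rota-Baxter operator is a linear $T:M\to A$ with $T(u^* )=T(u)^*$ and $T(u)T(v)=T(uT(v)+T(u)v)$ for $u,v\in M$. Notation: $u\circledast v=uT(v)+T(u)v$, $l_T(u,a)=T(u)a-T(ua)$, $r_T(a,u)=aT(u)-T(au)$. Let $i\mathrm{Hom}(M^{\otimes0},A)=\{a\in A\mid a^*=-a\}$ and for $n\ge1$ $i\mathrm{Hom}(M^{\otimes n},A)=\{f\mid f(u_1,\ldots,u_n)^*=(-1)^{\frac{(n-1)(n-2)}{2}}f(u_n^*,\ldots,u_1^* )\}$. The differential: $d_T(a)(u)=l_T(u,a)-r_T(a,u)$, and for $n\ge1$, $(d_Tf)(u_1,\ldots,u_{n+1})=(-1)^n\big[l_T(u_1,f(u_2,\ldots,u_{n+1}))+\sum_{i=1}^n(-1)^if(u_1,\ldots,u_i\circledast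 u_{i+1},\ldots,u_{n+1})+(-1)^{n+1}r_T(f(u_1,\ldots,u_n),u_{n+1})\big]$; $iH^\bullet_T(M,A)$ is the cohomology of $(i\mathrm{Hom}(M^{\otimes\bullet},A),d_T)$. A formal deformation of $T$ is $T_t=\sum_{i\ge0}t^iT_i$, $T_i\in\mathrm{Hom}(M,A)$, $T_0=T$, such that the $\mathbb{K}[[t]]$-linear extension $T_t:M[[t]]\to A[[t]]$ is a relative Rota-Baxter operator on the involutive algebra $A[[t]]$ w.r.t. the involutive bimodule $M[[t]]$ (structures extended $\mathbb{K}[[t]]$-linearly); equivalently $T_k(u^* )=T_k(u)^*$ and $\sum_{i+j=k}T_i(u)T_j(v)=\sum_{i+j=k}T_i(uT_j(v)+T_j(u)v)$ for all $k\ge0$. Two deformations $T_t,T'_t$ are equivalent if there exist $\mathbf a\in A$ with $\mathbf a^*=-\mathbf a$ and linear maps $\phi_j:A\to A$, $\psi_j:M\to M$ ($j\ge2$) commuting with the involutions such that $\phi_t=\mathrm{id}_A+t(\mathrm{ad}^l_{\mathbf a}-\mathrm{ad}^r_{\mathbf a})+\sum_{j\ge2}t^j\phi_j$ and $\psi_t=\mathrm{id}_M+t(l_{\mathbf a}-r_{\mathbf a})+\sum_{j\ge2}t^j\psi_j$ (where $\mathrm{ad}^l_{\mathbf a}(b)=\mathbf ab$, $\mathrm{ad}^r_{\mathbf a}(b)=b\mathbf a$, $l_{\mathbf a}(u)=\mathbf au$, $r_{\mathbf a}(u)=u\mathbf a$) satisfy $\phi_t(ab)=\phi_t(a)\phi_t(b)$,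 $T'_t\circ\psi_t=\phi_t\circ T_t$, $\psi_t(au)=\phi_t(a)\psi_t(u)$, $\psi_t(ua)=\psi_t(u)\phi_t(a)$ for all $a,b\in A$, $u\in M$. *)

theory Defs
  imports Main
begin

definition vspace :: "('k::field \<Rightarrow> 'v::ab_group_add \<Rightarrow> 'v) \<Rightarrow> bool" where
  "vspace sm \<longleftrightarrow>
     (\<forall>c x y. sm c (x + y) = sm c x + sm c y) \<and>
     (\<forall>c d x. sm (c + d) x = sm c x + sm d x) \<and>
     (\<forall>c d x. sm (c * d) x = sm c (sm d x)) \<and>
     (\<forall>x. sm 1 x = x)"

definition lin :: "('k::field \<Rightarrow> 'v::ab_group_add \<Rightarrow> 'v) \<Rightarrow> ('k \<Rightarrow> 'w::ab_group_add \<Rightarrow> 'w)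
                    \<Rightarrow> ('v \<Rightarrow> 'w) \<Rightarrow> bool" where
  "lin sm1 sm2 f \<longleftrightarrow> (\<forall>x y. f (x + y) = f x + f y) \<and> (\<forall>c x. f (sm1 c x) = sm2 c (f x))"

definition inv_algebra ::
  "('k::field \<Rightarrow> 'a::ab_group_add \<Rightarrow> 'a) \<Rightarrow> ('a \<Rightarrow> 'a \<Rightarrow> 'a) \<Rightarrow> ('a \<Rightarrow> 'a) \<Rightarrow> bool" where
  "inv_algebra smA mul st \<longleftrightarrow>
     vspace smA \<and>
     (\<forall>a. lin smA smA (mul a)) \<and> (\<forall>b. lin smA smA (\<lambda>a. mul a b)) \<and>
     (\<forall>a b c. mul (mul a b) c = mul a (mul b c)) \<and>
     lin smA smA st \<and>
     (\<forall>a. st (st a) = a) \<and>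
     (\<forall>a b. st (mul a b) = mul (st b) (st a))"

definition inv_bimodule ::
  "('k::field \<Rightarrow> 'a::ab_group_add \<Rightarrow> 'a) \<Rightarrow> ('a \<Rightarrow> 'a \<Rightarrow> 'a) \<Rightarrow> ('a \<Rightarrow> 'a) \<Rightarrow>
   ('k \<Rightarrow> 'm::ab_group_add \<Rightarrow> 'm) \<Rightarrow> ('a \<Rightarrow> 'm \<Rightarrow> 'm) \<Rightarrow> ('m \<Rightarrow> 'a \<Rightarrow> 'm) \<Rightarrow> ('m \<Rightarrow> 'm) \<Rightarrow> bool" where
  "inv_bimodule smA mul st smM la ra stM \<longleftrightarrow>
     vspace smM \<and>
     (\<forall>a. lin smM smM (la a)) \<and> (\<forall>u. lin smA smM (\<lambda>a. la a u)) \<and>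
     (\<forall>a. lin smM smM (\<lambda>u. ra u a)) \<and> (\<forall>u. lin smA smM (ra u)) \<and>
     (\<forall>a b u. la (mul a b) u = la a (la b u)) \<and>
     (\<forall>a b u. ra u (mul a b) = ra (ra u a) b) \<and>
     (\<forall>a b u. ra (la a u) b = la a (ra u b)) \<and>
     lin smM smM stM \<and>
     (\<forall>u. stM (stM u) = u) \<and>
     (\<forall>a u. stM (la a u) = ra (stM u) (st a)) \<and>
     (\<forall>a u. stM (ra u a) = la (st a) (stM u))"

definition relRB ::
  "('k::field \<Rightarrow> 'a::ab_group_add \<Rightarrow> 'a) \<Rightarrow> ('a \<Rightarrow> 'a \<Rightarrow> 'a) \<Rightarrow> ('a \<Rightarrow> 'a) \<Rightarrow>
   ('k \<Rightarrow> 'm::ab_group_add \<Rightarrow> 'm) \<Rightarrow> ('a \<Rightarrow> 'm \<Rightarrow> 'm) \<Rightarrow> ('m \<Rightarrow> 'a \<Rightarrow> 'm) \<Rightarrow> ('m \<Rightarrow> 'm) \<Rightarrow>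
   ('m \<Rightarrow> 'a) \<Rightarrow> bool" where
  "relRB smA mul st smM la ra stM T \<longleftrightarrow>
     lin smM smA T \<and>
     (\<forall>u. T (stM u) = st (T u)) \<and>
     (\<forall>u v. mul (T u) (T v) = T (ra u (T v) + la (T u) v))"

definition circ_T where "circ_T la ra T u v = ra u (T v) + la (T u) v"
definition l_T where "l_T mul ra T u a = mul (T u) a - T (ra u a)"
definition r_T where "r_T mul la T a u = mul a (T u) - T (la a u)"

text \<open>An n-cochain is represented as a function on lists of arguments of length n
  (values on lists of other lengths are irrelevant). A 0-cochain f is the element f [].\<close>

definition multilin ::
  "('k::field \<Rightarrow> 'm::ab_group_add \<Rightarrow> 'm) \<Rightarrow> ('k \<Rightarrow> 'a::ab_group_add \<Rightarrow> 'a) \<Rightarrow> nat \<Rightarrow> ('m list \<Rightarrow> 'a) \<Rightarrow> bool" where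
  "multilin smM smA n f \<longleftrightarrow>
     (\<forall>xs ys. length xs + length ys + 1 = n \<longrightarrow> lin smM smA (\<lambda>u. f (xs @ u # ys)))"

definition iHom ::
  "('k::field \<Rightarrow> 'm::ab_group_add \<Rightarrow> 'm) \<Rightarrow> ('k \<Rightarrow> 'a::ab_group_add \<Rightarrow> 'a) \<Rightarrow> ('a \<Rightarrow> 'a) \<Rightarrow> ('m \<Rightarrow> 'm)
   \<Rightarrow> nat \<Rightarrow> ('m list \<Rightarrow> 'a) \<Rightarrow> bool" where
  "iHom smM smA st stM n f \<longleftrightarrow>
     (if n = 0 then st (f []) = - f []
      else multilin smM smA n f \<and>
           (\<forall>us. length us = n \<longrightarrow>
              st (f us) = (if even (((n - 1) * (n - 2)) div 2) then f (rev (map stM us))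
                           else - f (rev (map stM us)))))"

definition sgn_mult :: "nat \<Rightarrow> 'a::ab_group_add \<Rightarrow> 'a" where
  "sgn_mult n x = (if even n then x else - x)"

definition dT ::
  "('a::ab_group_add \<Rightarrow> 'a \<Rightarrow> 'a) \<Rightarrow> ('a \<Rightarrow> 'm::ab_group_add \<Rightarrow> 'm) \<Rightarrow> ('m \<Rightarrow> 'a \<Rightarrow> 'm) \<Rightarrow> ('m \<Rightarrow> 'a)
   \<Rightarrow> nat \<Rightarrow> ('m list \<Rightarrow> 'a) \<Rightarrow> ('m list \<Rightarrow> 'a)" where
  "dT mul la ra T n f us =
     (if n = 0 then l_T mul ra T (us ! 0) (f []) - r_T mul la T (f []) (us ! 0)
      else sgn_mult n
        (l_T mul ra T (us ! 0) (f (drop 1 us))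
         + (\<Sum>i\<in>{1..n}. sgn_mult i
              (f (take (i - 1) us @ circ_T la ra T (us ! (i - 1)) (us ! i) # drop (i + 1) us)))
         + sgn_mult (n + 1) (r_T mul la T (f (take n us)) (us ! n))))"

definition cocycle where
  "cocycle smM smA st stM mul la ra T n f \<longleftrightarrow>
     iHom smM smA st stM n f \<and> (\<forall>us. length us = n + 1 \<longrightarrow> dT mul la ra T n f us = 0)"

definition same_class where
  "same_class smM smA st stM mul la ra T n f g \<longleftrightarrow>
     (\<exists>h. iHom smM smA st stM (n - 1) h \<and>
          (\<forall>us. length us = n \<longrightarrow> f us - g us = dT mul la ra T (n - 1) h us))"

definition cochain1 :: "('m \<Rightarrow> 'a) \<Rightarrow> 'm list \<Rightarrow> 'a" where
  "cochain1 f us = f (hd us)"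

text \<open>T_t = \<Sum> t^i Ts i, coefficientwise conditions.\<close>
definition deformation where
  "deformation smA mul st smM la ra stM T Ts \<longleftrightarrow>
     Ts 0 = T \<and>
     (\<forall>k. lin smM smA (Ts k)) \<and>
     (\<forall>k u. Ts k (stM u) = st (Ts k u)) \<and>
     (\<forall>k u v. (\<Sum>i\<le>k. mul (Ts i u) (Ts (k - i) v))
              = (\<Sum>i\<le>k. Ts i (ra u (Ts (k - i) v) + la (Ts (k - i) u) v)))"

definition equiv_deformation where
  "equiv_deformation smA mul st smM la ra stM Ts Ts' \<longleftrightarrow>
     (\<exists>a phi psi.
        st a = - a \<and>
        phi 0 = id \<and> phi 1 = (\<lambda>b. mul a b - mul b a) \<and>
        psi 0 = id \<and> psi 1 = (\<lambda>u. la a u - ra u a) \<and>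
        (\<forall>j\<ge>2. lin smA smA (phi j) \<and> lin smM smM (psi j) \<and>
                (\<forall>b. phi j (st b) = st (phi j b)) \<and> (\<forall>u. psi j (stM u) = stM (psi j u))) \<and>
        (\<forall>k b c. phi k (mul b c) = (\<Sum>i\<le>k. mul (phi i b) (phi (k - i) c))) \<and>
        (\<forall>k u. (\<Sum>i\<le>k. Ts' i (psi (k - i) u)) = (\<Sum>i\<le>k. phi i (Ts (k - i) u))) \<and>
        (\<forall>k b u. psi k (la b u) = (\<Sum>i\<le>k. la (phi i b) (psi (k - i) u))) \<and>
        (\<forall>k b u. psi k (ra u b) = (\<Sum>i\<le>k. ra (psi i u) (phi (k - i) b))))"

end

theory Submission
  imports Defs "HOL.Modules"
begin

text \<open>Comparing the coefficients of \<open>t\<close> in the Rota-Baxter identity for \<open>T\<^sub>t\<close> shows that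
  \<open>T\<^sub>1\<close> satisfies the linearisation of that identity at \<open>T\<close>, which is exactly \<open>d\<^sub>T T\<^sub>1 = 0\<close>.
  Comparing the coefficients of \<open>t\<close> in \<open>T'\<^sub>t \<circ> \<psi>\<^sub>t = \<phi>\<^sub>t \<circ> T\<^sub>t\<close> gives
  \<open>T'\<^sub>1 - T\<^sub>1 = [a, T(-)] - T([a, -]) = d\<^sub>T(-a)\<close>, and \<open>-a\<close> is a skew 0-cochain.\<close>

lemma inv_algebra_additive:
  assumes "inv_algebra smA mul st"
  shows "additive (mul a)" "additive (\<lambda>b. mul b a)" "additive st"
  using assms unfolding inv_algebra_def lin_def additive_def by blast+

lemma inv_bimodule_additive:
  assumes "inv_bimodule smA mul st smM la ra stM"
  shows "additive (\<lambda>a. la a u)" "additive (ra u)"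
  using assms unfolding inv_bimodule_def lin_def additive_def by simp_all

lemma relRB_additive:
  assumes "relRB smA mul st smM la ra stM T"
  shows "additive T"
  using assms unfolding relRB_def lin_def additive_def by simp

lemma sum_atMost_1: "(\<Sum>i\<le>(1::nat). g i) = g 0 + (g 1 :: 'b::comm_monoid_add)"
  by (simp add: atMost_Suc add.commute)

lemma iHom_cochain1:
  assumes "lin smM smA f" and "\<And>u. f (stM u) = st (f u)"
  shows "iHom smM smA st stM 1 (cochain1 f)"
  using assms unfolding iHom_def multilin_def cochain1_def
  by (auto simp: length_Suc_conv)

lemma dT_cochain1:
  "dT mul la ra T 1 (cochain1 f) [u, v]
     = - (l_T mul ra T u (f v) - f (circ_T la ra T u v) + r_T mul la T (f u) v)"
  by (simp add: dT_def cochain1_def sgn_mult_def)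

lemma deformation_coeff1:
  fixes Ts :: "nat \<Rightarrow> 'm::ab_group_add \<Rightarrow> 'a::ab_group_add"
  assumes "deformation smA mul st smM la ra stM T Ts"
  shows "mul (T u) (Ts 1 v) + mul (Ts 1 u) (T v)
           = T (ra u (Ts 1 v) + la (Ts 1 u) v) + Ts 1 (circ_T la ra T u v)"
proof -
  have "(\<Sum>i\<le>1. mul (Ts i u) (Ts (1 - i) v))
          = (\<Sum>i\<le>1. Ts i (ra u (Ts (1 - i) v) + la (Ts (1 - i) u) v))"
    and "Ts 0 = T"
    using assms unfolding deformation_def by blast+
  then show ?thesis
    by (simp add: sum_atMost_1 circ_T_def)
qed

lemma cocycle_cochain1:
  fixes T f :: "'m::ab_group_add \<Rightarrow> 'a::ab_group_add"
  assumes "additive T" and "lin smM smA f" and "\<And>u. f (stM u) = st (f u)"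
    and linearised_RB: "\<And>u v. mul (T u) (f v) + mul (f u) (T v)
                          = T (ra u (f v) + la (f u) v) + f (circ_T la ra T u v)"
  shows "cocycle smM smA st stM mul la ra T 1 (cochain1 f)"
  unfolding cocycle_def
proof (intro conjI allI impI)
  show "iHom smM smA st stM 1 (cochain1 f)"
    using assms(2,3) by (rule iHom_cochain1)
next
  fix us :: "'m list"
  assume "length us = 1 + 1"
  then obtain u v where "us = [u, v]"
    by (auto simp: length_Suc_conv)
  then have "dT mul la ra T 1 (cochain1 f) us
      = - (l_T mul ra T u (f v) - f (circ_T la ra T u v) + r_T mul la T (f u) v)"
    by (simp only: dT_cochain1)
  also have "\<dots> = 0"
    using linearised_RB[of u v] additive.add[OF assms(1)]
    by (simp add: l_T_def r_T_def algebra_simps)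
  finally show "dT mul la ra T 1 (cochain1 f) us = 0" .
qed

lemma equiv_deformation_coeff1:
  fixes Ts Ts' :: "nat \<Rightarrow> 'm::ab_group_add \<Rightarrow> 'a::ab_group_add"
  assumes "equiv_deformation smA mul st smM la ra stM Ts Ts'"
    and "Ts 0 = T" and "Ts' 0 = T"
  obtains a where "st a = - a"
    and "\<And>u. Ts' 1 u - Ts 1 u = (mul a (T u) - mul (T u) a) - T (la a u - ra u a)"
proof -
  obtain a phi psi where "st a = - a" "phi 0 = id" "phi 1 = (\<lambda>b. mul a b - mul b a)"
    "psi 0 = id" "psi 1 = (\<lambda>u. la a u - ra u a)"
    and intertwine: "\<And>k u. (\<Sum>i\<le>k. Ts' i (psi (k - i) u)) = (\<Sum>i\<le>k. phi i (Ts (k - i) u))"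
    using assms(1) unfolding equiv_deformation_def by blast
  show thesis
  proof (rule that)
    show "st a = - a" by fact
    fix u
    have "T (la a u - ra u a) + Ts' 1 u = Ts 1 u + (mul a (T u) - mul (T u) a)"
      using intertwine[of 1 u] assms(2,3) \<open>phi 0 = id\<close> \<open>phi 1 = _\<close> \<open>psi 0 = id\<close> \<open>psi 1 = _\<close>
      by (simp add: sum_atMost_1)
    then show "Ts' 1 u - Ts 1 u = (mul a (T u) - mul (T u) a) - T (la a u - ra u a)"
      by (simp add: algebra_simps)
  qed
qed

lemma dT_neg_const:
  assumes "inv_algebra smA mul st" "inv_bimodule smA mul st smM la ra stM" "additive T"
  shows "dT mul la ra T 0 (\<lambda>_. - a) [u] = (mul a (T u) - mul (T u) a) - T (la a u - ra u a)"
proof -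
  interpret T: additive T by fact
  interpret left: additive "mul (T u)" by (rule inv_algebra_additive(1)[OF assms(1)])
  interpret right: additive "\<lambda>b. mul b (T u)" by (rule inv_algebra_additive(2)[OF assms(1)])
  interpret la: additive "\<lambda>b. la b u" by (rule inv_bimodule_additive(1)[OF assms(2)])
  interpret ra: additive "ra u" by (rule inv_bimodule_additive(2)[OF assms(2)])
  show ?thesis
    using left.minus[of a] right.minus[of a] la.minus[of a] ra.minus[of a]
    by (simp add: dT_def l_T_def r_T_def T.minus T.diff algebra_simps)
qed

lemma same_class_cochain1:
  fixes T f g :: "'m::ab_group_add \<Rightarrow> 'a::ab_group_add"
  assumes "inv_algebra smA mul st" "inv_bimodule smA mul st smM la ra stM" "additive T"
    and "st a = - a"
    and "\<And>u. g u - f u = (mul a (T u) - mul (T u) a) - T (la a u - ra u a)"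
  shows "same_class smM smA st stM mul la ra T 1 (cochain1 g) (cochain1 f)"
  unfolding same_class_def
proof (intro exI[of _ "\<lambda>_. - a"] conjI allI impI)
  show "iHom smM smA st stM (1 - 1) (\<lambda>_. - a)"
    using assms(4) additive.minus[OF inv_algebra_additive(3)[OF assms(1)]]
    by (simp add: iHom_def)
next
  fix us :: "'m list"
  assume "length us = 1"
  then obtain u where "us = [u]"
    by (auto simp: length_Suc_conv)
  then have "cochain1 g us - cochain1 f us
      = (mul a (T u) - mul (T u) a) - T (la a u - ra u a)"
    using assms(5) by (simp add: cochain1_def)
  also have "\<dots> = dT mul la ra T (1 - 1) (\<lambda>_. - a) us"
    using dT_neg_const[OF assms(1-3)] \<open>us = [u]\<close> by simp
  finally show "cochain1 g us - cochain1 f us = dT mul la ra T (1 - 1) (\<lambda>_. - a) us" .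
qed

theorem mainTheorem6:
  fixes smA :: "'k::field \<Rightarrow> 'a::ab_group_add \<Rightarrow> 'a" and mul :: "'a \<Rightarrow> 'a \<Rightarrow> 'a"
    and st :: "'a \<Rightarrow> 'a"
    and smM :: "'k \<Rightarrow> 'm::ab_group_add \<Rightarrow> 'm" and la :: "'a \<Rightarrow> 'm \<Rightarrow> 'm"
    and ra :: "'m \<Rightarrow> 'a \<Rightarrow> 'm" and stM :: "'m \<Rightarrow> 'm"
    and T :: "'m \<Rightarrow> 'a" and Ts :: "nat \<Rightarrow> 'm \<Rightarrow> 'a"
  assumes "inv_algebra smA mul st"
    and "inv_bimodule smA mul st smM la ra stM"
    and "relRB smA mul st smM la ra stM T"
    and "deformation smA mul st smM la ra stM T Ts"
  shows "cocycle smM smA st stM mul la ra T 1 (cochain1 (Ts 1)) \<and>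
         (\<forall>Ts'. deformation smA mul st smM la ra stM T Ts' \<and>
                equiv_deformation smA mul st smM la ra stM Ts Ts' \<longrightarrow>
                same_class smM smA st stM mul la ra T 1 (cochain1 (Ts' 1)) (cochain1 (Ts 1)))"
proof (intro conjI allI impI)
  have T: "additive T"
    by (rule relRB_additive[OF assms(3)])
  have "lin smM smA (Ts 1)" and "\<And>u. Ts 1 (stM u) = st (Ts 1 u)" and "Ts 0 = T"
    using assms(4) by (simp_all add: deformation_def)
  then show "cocycle smM smA st stM mul la ra T 1 (cochain1 (Ts 1))"
    by (intro cocycle_cochain1[OF T _ _ deformation_coeff1[OF assms(4)]])
  fix Ts'
  assume "deformation smA mul st smM la ra stM T Ts' \<and>
          equiv_deformation smA mul st smM la ra stM Ts Ts'"
  then have "Ts' 0 = T" and equiv: "equiv_deformation smA mul st smM la ra stM Ts Ts'"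
    by (simp_all add: deformation_def)
  obtain a where "st a = - a"
    and "\<And>u. Ts' 1 u - Ts 1 u = (mul a (T u) - mul (T u) a) - T (la a u - ra u a)"
    using equiv_deformation_coeff1[OF equiv \<open>Ts 0 = T\<close> \<open>Ts' 0 = T\<close>] by blast
  then show "same_class smM smA st stM mul la ra T 1 (cochain1 (Ts' 1)) (cochain1 (Ts 1))"
    by (rule same_class_cochain1[OF assms(1,2) T])
qed

end
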